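(* Let $p>1$, $\alpha\in\mathbb{R}$. For each $T>0$ there exists exactly one positive solution $\psi$ of $$\psi'(t)=\psi^p(t)\ln^\alpha(\psi^2(t)+2),\qquad \lim_{t\to T}\psi(t)=+\infty.$$ Moreover, $$\psi(t)\sim\kappa_\alpha(T-t)^{-\frac1{p-1}}|\ln(T-t)|^{-\frac{\alpha}{p-1}}\quad\text{as }t\to T,\qquad \kappa_\alpha=(p-1)^{-\frac1{p-1}}\left(\frac{p-1}2\right)^{\frac{\alpha}{p-1}}.$$ *)

theory Defs
  imports "HOL-Analysis.Analysis" "HOL-Library.Landau_Symbols"
begin

definition blowup_solution :: "real \<Rightarrow> real \<Rightarrow> real \<Rightarrow> (real \<Rightarrow> real) \<Rightarrow> bool" where
  "blowup_solution p \<alpha> T \<psi> \<longleftrightarrow>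
     (\<forall>t<T. \<psi> t > 0 \<and>
        (\<psi> has_real_derivative ((\<psi> t) powr p * (ln ((\<psi> t)\<^sup>2 + 2)) powr \<alpha>)) (at t)) \<and>
     filterlim \<psi> at_top (at_left T)"

definition kappa :: "real \<Rightarrow> real \<Rightarrow> real" where
  "kappa p \<alpha> = (p - 1) powr (-1 / (p - 1)) * ((p - 1) / 2) powr (\<alpha> / (p - 1))"

end

theory Submission
  imports Defs "HOL-Real_Asymp.Real_Asymp"
begin

text \<open>Write the equation as \<open>\<psi>' = 1 / h \<psi>\<close> with \<open>h x = x\<^sup>-\<^sup>p ln\<^sup>-\<^sup>\<alpha>(x\<^sup>2 + 2)\<close> and let
  \<open>G x = \<integral>\<^sub>x\<^sup>\<infinity> h\<close>, the time a solution starting at \<open>x\<close> needs to escape to infinity; it is finite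
  since \<open>p > 1\<close>, and \<open>G x \<rightarrow> \<infinity>\<close> as \<open>x \<rightarrow> 0\<close>. Along a solution \<open>G \<circ> \<psi>\<close> has derivative \<open>-1\<close>, so blow-up
  at \<open>T\<close> means \<open>G (\<psi> t) = T - t\<close>; since \<open>G\<close> is a decreasing bijection of \<open>(0, \<infinity>)\<close> this both
  determines and defines \<open>\<psi>\<close>. By L'Hopital \<open>G x \<sim> x\<^sup>1\<^sup>-\<^sup>p ln\<^sup>-\<^sup>\<alpha>(x\<^sup>2 + 2) / (p - 1)\<close>; taking
  logarithms in \<open>G (\<psi> t) = T - t\<close> gives \<open>ln (\<psi>\<^sup>2 + 2) \<sim> 2 / (p - 1) \<bar>ln (T - t)\<bar>\<close>, and
  substituting this back yields the asymptotics of \<open>\<psi>\<close>.\<close>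

lemma lhopital_zero_at_top:
  fixes f g :: "real \<Rightarrow> real"
  assumes "(f \<longlongrightarrow> 0) at_top" and "(g \<longlongrightarrow> 0) at_top"
    and "eventually (\<lambda>x. g x \<noteq> 0) at_top"
    and "eventually (\<lambda>x. g' x \<noteq> 0) at_top"
    and "eventually (\<lambda>x. DERIV f x :> f' x) at_top"
    and "eventually (\<lambda>x. DERIV g x :> g' x) at_top"
    and "((\<lambda>x. f' x / g' x) \<longlongrightarrow> y) at_top"
  shows "((\<lambda>x. f x / g x) \<longlongrightarrow> y) at_top"
  unfolding filterlim_at_top_to_right
proof (rule lhopital_right_0)
  let ?D = "\<lambda>f' x. f' (inverse x) * - (inverse x ^ Suc (Suc 0))"
  show "((\<lambda>x. f (inverse x)) \<longlongrightarrow> 0) (at_right 0)" "((\<lambda>x. g (inverse x)) \<longlongrightarrow> 0) (at_right 0)"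
    using assms(1,2) unfolding filterlim_at_top_to_right .
  show "eventually (\<lambda>x. g (inverse x) \<noteq> 0) (at_right 0)"
    using assms(3) unfolding eventually_at_right_to_top by simp
  show "eventually (\<lambda>x. ?D g' x \<noteq> 0) (at_right 0)"
    unfolding eventually_at_right_to_top
    using assms(4) eventually_gt_at_top[of 0] by eventually_elim auto
  show "eventually (\<lambda>x. DERIV (\<lambda>x. f (inverse x)) x :> ?D f' x) (at_right 0)"
    unfolding eventually_at_right_to_top using assms(5) eventually_gt_at_top[of 0]
    by eventually_elim (rule derivative_eq_intros DERIV_chain'[where f = inverse] | simp)+
  show "eventually (\<lambda>x. DERIV (\<lambda>x. g (inverse x)) x :> ?D g' x) (at_right 0)"
    unfolding eventually_at_right_to_top using assms(6) eventually_gt_at_top[of 0]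
    by eventually_elim (rule derivative_eq_intros DERIV_chain'[where f = inverse] | simp)+
  have "eventually (\<lambda>x. f' x / g' x = ?D f' (inverse x) / ?D g' (inverse x)) at_top"
    using eventually_gt_at_top[of 0] by eventually_elim simp
  then show "((\<lambda>x. ?D f' x / ?D g' x) \<longlongrightarrow> y) (at_right 0)"
    unfolding filterlim_at_right_to_top using assms(7) by (rule Lim_transform_eventually[rotated])
qed

lemma DERIV_le_imp_diff_le:
  fixes F G f g :: "real \<Rightarrow> real"
  assumes "a \<le> b"
    and "\<And>x. a \<le> x \<Longrightarrow> x \<le> b \<Longrightarrow> (F has_real_derivative f x) (at x)"
    and "\<And>x. a \<le> x \<Longrightarrow> x \<le> b \<Longrightarrow> (G has_real_derivative g x) (at x)"
    and "\<And>x. a \<le> x \<Longrightarrow> x \<le> b \<Longrightarrow> f x \<le> g x"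
  shows "F b - F a \<le> G b - G a"
proof -
  have "(\<lambda>x. G x - F x) a \<le> (\<lambda>x. G x - F x) b"
  proof (rule DERIV_nonneg_imp_nondecreasing[OF assms(1)])
    fix x assume "a \<le> x" "x \<le> b"
    then show "\<exists>y. DERIV (\<lambda>x. G x - F x) x :> y \<and> 0 \<le> y"
      using assms(2-4) by (intro exI[of _ "g x - f x"] conjI DERIV_diff) auto
  qed
  then show ?thesis by simp
qed

lemma antiderivative_le_of_le_powr:
  fixes H h :: "real \<Rightarrow> real"
  assumes "q > 1" "x\<^sub>0 > 0" "C \<ge> 0" "x \<ge> x\<^sub>0"
    and "\<And>x. x \<ge> x\<^sub>0 \<Longrightarrow> (H has_real_derivative h x) (at x)"
    and "\<And>x. x \<ge> x\<^sub>0 \<Longrightarrow> h x \<le> C * x powr (-q)"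
  shows "H x \<le> H x\<^sub>0 + C / (q - 1) * x\<^sub>0 powr (1 - q)"
proof -
  let ?K = "\<lambda>x. - C / (q - 1) * x powr (1 - q)"
  have "H x - H x\<^sub>0 \<le> ?K x - ?K x\<^sub>0"
  proof (rule DERIV_le_imp_diff_le[OF assms(4) assms(5)])
    fix z assume z: "x\<^sub>0 \<le> z"
    show "(?K has_real_derivative C * z powr (-q)) (at z)"
      using assms(1,2) z by (auto intro!: derivative_eq_intros) (simp add: field_split_simps)
    show "h z \<le> C * z powr (-q)" using assms(6) z .
  qed auto
  moreover have "?K x \<le> 0" using assms(1,3) by simp
  ultimately show ?thesis by simp
qed

lemma antiderivative_at_right_0_at_bot:
  fixes H h :: "real \<Rightarrow> real"
  assumes "r > 1" "x\<^sub>1 > 0" "c > 0"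
    and "\<And>x. 0 < x \<Longrightarrow> x \<le> x\<^sub>1 \<Longrightarrow> (H has_real_derivative h x) (at x)"
    and "\<And>x. 0 < x \<Longrightarrow> x \<le> x\<^sub>1 \<Longrightarrow> h x \<ge> c * x powr (-r)"
  shows "filterlim H at_bot (at_right 0)"
proof -
  let ?K = "\<lambda>x. - c / (r - 1) * x powr (1 - r)"
  have "H x \<le> H x\<^sub>1 - ?K x\<^sub>1 + ?K x" if "0 < x" "x \<le> x\<^sub>1" for x
  proof -
    have "?K x\<^sub>1 - ?K x \<le> H x\<^sub>1 - H x"
    proof (rule DERIV_le_imp_diff_le[OF that(2)])
      fix z assume z: "x \<le> z" "z \<le> x\<^sub>1"
      show "(?K has_real_derivative c * z powr (-r)) (at z)"
        using assms(1) z that by (auto intro!: derivative_eq_intros) (simp add: field_split_simps)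
      show "c * z powr (-r) \<le> h z" using assms(5) z that by simp
    qed (use assms(4) that in auto)
    then show ?thesis by simp
  qed
  then have "eventually (\<lambda>x. H x \<le> H x\<^sub>1 - ?K x\<^sub>1 + ?K x) (at_right 0)"
    using assms(2) by (auto simp: eventually_at_right_field intro!: exI[of _ x\<^sub>1])
  moreover have "filterlim (\<lambda>x. H x\<^sub>1 - ?K x\<^sub>1 + ?K x) at_bot (at_right 0)"
    using assms(1,3) by real_asymp
  ultimately show ?thesis
    by (auto simp: filterlim_at_bot elim: eventually_elim2 intro: order_trans)
qed

lemma asymp_equiv_filterlim_at_right_0:
  fixes f g :: "'a \<Rightarrow> real"
  assumes "f \<sim>[F] g" "filterlim f (at_right 0) F"
  shows "filterlim g (at_right 0) F"
proof -
  have f: "eventually (\<lambda>x. f x > 0) F" "(f \<longlongrightarrow> 0) F"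
    using assms(2) by (auto simp: filterlim_at elim: eventually_mono)
  have "((\<lambda>x. f x / g x) \<longlongrightarrow> 1) F"
    using f(1) by (intro asymp_equivD_strong[OF assms(1)]) (auto elim: eventually_mono)
  then have "eventually (\<lambda>x. f x / g x > 0) F"
    by (rule order_tendstoD) simp
  with f(1) have "eventually (\<lambda>x. g x > 0) F"
    by eventually_elim (simp add: zero_less_divide_iff)
  moreover have "(g \<longlongrightarrow> 0) F"
    using assms(1) f(2) by (rule asymp_equiv_tendsto_transfer)
  ultimately show ?thesis
    by (auto simp: filterlim_at elim: eventually_mono)
qed

lemma asymp_equiv_ln:
  fixes f g :: "'a \<Rightarrow> real"
  assumes "f \<sim>[F] g" "filterlim f (at_right 0) F"
  shows "(\<lambda>x. ln (f x)) \<sim>[F] (\<lambda>x. ln (g x))"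
proof -
  have "eventually (\<lambda>x. f x > 0) F" "eventually (\<lambda>x. g x > 0) F"
    using assms(2) asymp_equiv_filterlim_at_right_0[OF assms]
    by (auto simp: filterlim_at elim: eventually_mono)
  then have pos: "eventually (\<lambda>x. f x > 0 \<and> g x > 0) F"
    by (rule eventually_conj)
  have ln_f: "filterlim (\<lambda>x. ln (f x)) at_bot F"
    using filterlim_compose[OF ln_at_0 assms(2)] .
  have "((\<lambda>x. g x / f x) \<longlongrightarrow> 1) F"
    using pos by (intro asymp_equivD_strong[OF asymp_equiv_symI[OF assms(1)]]) (auto elim: eventually_mono)
  then have "((\<lambda>x. ln (g x / f x)) \<longlongrightarrow> 0) F"
    using tendsto_ln[of "\<lambda>x. g x / f x" 1 F] by simp
  moreover have "filterlim (\<lambda>x. ln (f x)) at_infinity F"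
    using ln_f at_bot_le_at_infinity by (rule filterlim_mono) simp
  ultimately have "((\<lambda>x. ln (g x / f x) / ln (f x)) \<longlongrightarrow> 0) F"
    by (rule tendsto_divide_0)
  then have "((\<lambda>x. 1 + ln (g x / f x) / ln (f x)) \<longlongrightarrow> 1) F"
    using tendsto_add[OF tendsto_const, of _ 0 F 1] by simp
  moreover have "eventually (\<lambda>x. 1 + ln (g x / f x) / ln (f x) = ln (g x) / ln (f x)) F"
    using pos ln_f[unfolded filterlim_at_bot_dense, rule_format, of 0]
    by eventually_elim (simp add: ln_div divide_simps)
  ultimately have "((\<lambda>x. ln (g x) / ln (f x)) \<longlongrightarrow> 1) F"
    by (rule Lim_transform_eventually)
  then show ?thesis
    by (rule asymp_equiv_symI[OF asymp_equivI'])
qed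

text \<open>\<open>H\<close> is an antiderivative of \<open>h\<close> on \<open>(0, \<infinity>)\<close>; the last two assumptions say that
  \<open>\<integral>\<^sup>\<infinity> h\<close> converges and \<open>\<integral>\<^sub>0 h\<close> diverges.\<close>

locale finite_escape =
  fixes h H :: "real \<Rightarrow> real"
  assumes h_pos: "x > 0 \<Longrightarrow> h x > 0"
    and H_deriv: "x > 0 \<Longrightarrow> (H has_real_derivative h x) (at x)"
    and H_bdd_above: "bdd_above (H ` {0<..})"
    and H_at_right_0: "filterlim H at_bot (at_right 0)"
begin

lemma H_strict_mono:
  assumes "0 < x" "x < y"
  shows "H x < H y"
proof (rule DERIV_pos_imp_increasing[OF assms(2)])
  fix z assume "x \<le> z"
  then show "\<exists>d. (H has_real_derivative d) (at z) \<and> 0 < d"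
    using assms(1) H_deriv[of z] h_pos[of z] by auto
qed

lemma H_less_Sup: "x > 0 \<Longrightarrow> H x < (SUP z\<in>{0<..}. H z)"
  using H_strict_mono[of x "x + 1"] cSUP_upper[OF _ H_bdd_above, of "x + 1"] by simp

lemma H_tendsto_Sup: "(H \<longlongrightarrow> (SUP z\<in>{0<..}. H z)) at_top"
proof (rule order_tendstoI)
  fix a assume "a > (SUP z\<in>{0<..}. H z)"
  show "eventually (\<lambda>x. H x < a) at_top"
    using eventually_gt_at_top[of 0]
    by eventually_elim (use H_less_Sup \<open>a > (SUP z\<in>{0<..}. H z)\<close> in force)
next
  fix a assume "a < (SUP z\<in>{0<..}. H z)"
  then obtain x\<^sub>0 where x\<^sub>0: "x\<^sub>0 > 0" "a < H x\<^sub>0"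
    using less_cSUP_iff[OF _ H_bdd_above] by auto
  show "eventually (\<lambda>x. a < H x) at_top"
    using eventually_gt_at_top[of x\<^sub>0] by eventually_elim (use H_strict_mono x\<^sub>0 in force)
qed

text \<open>The time \<open>\<integral>\<^sub>x\<^sup>\<infinity> h\<close> in which a solution of \<open>y' = 1 / h y\<close> starting at \<open>x\<close>
  escapes to infinity.\<close>

definition escape_time :: "real \<Rightarrow> real" where
  "escape_time x = (SUP z\<in>{0<..}. H z) - H x"

lemma escape_time_pos: "x > 0 \<Longrightarrow> escape_time x > 0"
  using H_less_Sup by (simp add: escape_time_def)

lemma escape_time_strict_antimono: "0 < x \<Longrightarrow> x < y \<Longrightarrow> escape_time y < escape_time x"
  using H_strict_mono by (simp add: escape_time_def)

lemma escape_time_deriv: "x > 0 \<Longrightarrow> (escape_time has_real_derivative - h x) (at x)"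
  unfolding escape_time_def by (auto intro!: derivative_eq_intros H_deriv)

lemma continuous_on_escape_time: "continuous_on {0<..} escape_time"
  by (intro continuous_at_imp_continuous_on ballI DERIV_isCont[OF escape_time_deriv]) auto

lemma escape_time_tendsto_0: "(escape_time \<longlongrightarrow> 0) at_top"
  unfolding escape_time_def
  using tendsto_diff[OF tendsto_const H_tendsto_Sup, of "SUP z\<in>{0<..}. H z"] by simp

lemma escape_time_at_right_0: "filterlim escape_time at_top (at_right 0)"
  unfolding escape_time_def diff_conv_add_uminus
  by (intro filterlim_tendsto_add_at_top[OF tendsto_const] filterlim_uminus_at_bot[THEN iffD1] H_at_right_0)

lemma bij_betw_escape_time: "bij_betw escape_time {0<..} {0<..}"
proof (rule bij_betw_imageI)
  show "inj_on escape_time {0<..}"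
    by (rule linorder_inj_onI') (use escape_time_strict_antimono in force)
  show "escape_time ` {0<..} = {0<..}"
  proof
    show "escape_time ` {0<..} \<subseteq> {0<..}" using escape_time_pos by auto
  next
    show "{0<..} \<subseteq> escape_time ` {0<..}"
    proof
      fix s :: real assume "s \<in> {0<..}"
      have "eventually (\<lambda>x. s < escape_time x) (at_right 0)"
        using escape_time_at_right_0 by (simp add: filterlim_at_top_dense)
      then have "eventually (\<lambda>x. 0 < x \<and> s < escape_time x) (at_right 0)"
        by (intro eventually_conj eventually_at_right_less)
      then obtain x\<^sub>1 where x\<^sub>1: "0 < x\<^sub>1" "s < escape_time x\<^sub>1"
        using eventually_happens'[OF trivial_limit_at_right_real] by blast
      have "eventually (\<lambda>x. escape_time x < s \<and> 0 < x) at_top"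
        using \<open>s \<in> {0<..}\<close> order_tendstoD(2)[OF escape_time_tendsto_0, of s]
          eventually_gt_at_top[of 0]
        by (auto intro: eventually_conj)
      then obtain x\<^sub>2 where x\<^sub>2: "escape_time x\<^sub>2 < s" "0 < x\<^sub>2"
        using eventually_happens'[OF trivial_limit_at_top_linorder] by blast
      have "x\<^sub>1 \<le> x\<^sub>2"
        using escape_time_strict_antimono[of x\<^sub>2 x\<^sub>1] x\<^sub>1 x\<^sub>2 by (cases "x\<^sub>1 \<le> x\<^sub>2") auto
      moreover have "continuous_on {x\<^sub>1..x\<^sub>2} escape_time"
        using continuous_on_escape_time by (rule continuous_on_subset) (use x\<^sub>1 in auto)
      ultimately obtain x where "x\<^sub>1 \<le> x" "escape_time x = s"
        using IVT2'[of escape_time x\<^sub>2 s x\<^sub>1] x\<^sub>1 x\<^sub>2 by auto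
      with x\<^sub>1 show "s \<in> escape_time ` {0<..}" by force
    qed
  qed
qed

definition escape_solution :: "real \<Rightarrow> (real \<Rightarrow> real) \<Rightarrow> bool" where
  "escape_solution T \<psi> \<longleftrightarrow>
     (\<forall>t<T. \<psi> t > 0 \<and> (\<psi> has_real_derivative inverse (h (\<psi> t))) (at t)) \<and>
     filterlim \<psi> at_top (at_left T)"

lemma escape_solution_escape_time:
  assumes sol: "escape_solution T \<psi>" and "t < T"
  shows "escape_time (\<psi> t) = T - t"
proof -
  have pos: "\<psi> t > 0" and deriv: "(\<psi> has_real_derivative inverse (h (\<psi> t))) (at t)" if "t < T" for t
    using sol that by (auto simp: escape_solution_def)
  define K where "K t = escape_time (\<psi> t) + t" for t
  have K_deriv: "(K has_real_derivative 0) (at t)" if "t < T" for t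
  proof -
    have "(K has_real_derivative - h (\<psi> t) * inverse (h (\<psi> t)) + 1) (at t)"
      unfolding K_def
      by (intro DERIV_add DERIV_chain2[OF escape_time_deriv deriv] pos DERIV_ident that)
    then show ?thesis using h_pos[OF pos[OF that]] by simp
  qed
  have K_const: "K s = K (T - 1)" if "s < T" for s
    by (rule DERIV_isconst3[of "min s (T - 1) - 1" T]) (use that K_deriv in auto)
  have "(K \<longlongrightarrow> 0 + T) (at_left T)"
    unfolding K_def
    using sol by (intro tendsto_add filterlim_compose[OF escape_time_tendsto_0] tendsto_ident_at)
      (simp add: escape_solution_def)
  moreover have "eventually (\<lambda>s. K s = K (T - 1)) (at_left T)"
    using eventually_at_left_real[of "T - 1" T] by (rule eventually_mono) (auto intro: K_const)
  ultimately have "((\<lambda>_. K (T - 1)) \<longlongrightarrow> T) (at_left T)"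
    by (simp add: tendsto_cong)
  then have "K (T - 1) = T"
    by (rule tendsto_const_iff[OF trivial_limit_at_left_real, THEN iffD1])
  with K_const[OF \<open>t < T\<close>] show ?thesis by (simp add: K_def)
qed

lemma escape_solution_unique:
  assumes "escape_solution T \<psi>\<^sub>1" "escape_solution T \<psi>\<^sub>2" "t < T"
  shows "\<psi>\<^sub>1 t = \<psi>\<^sub>2 t"
proof -
  have "\<psi>\<^sub>1 t \<in> {0<..}" "\<psi>\<^sub>2 t \<in> {0<..}"
    using assms by (auto simp: escape_solution_def)
  moreover have "escape_time (\<psi>\<^sub>1 t) = escape_time (\<psi>\<^sub>2 t)"
    using assms by (simp add: escape_solution_escape_time)
  ultimately show ?thesis
    using bij_betw_escape_time by (auto simp: bij_betw_def dest: inj_onD)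
qed

lemma escape_solution_exists: "escape_solution T (\<lambda>t. inv_into {0<..} escape_time (T - t))"
proof -
  define \<psi> where "\<psi> t = inv_into {0<..} escape_time (T - t)" for t
  have img: "escape_time ` {0<..} = {0<..}"
    using bij_betw_escape_time by (simp add: bij_betw_def)
  have pos: "\<psi> t > 0" and time_eq: "escape_time (\<psi> t) = T - t" if "t < T" for t
    using inv_into_into[of "T - t" escape_time "{0<..}"] f_inv_into_f[of "T - t" escape_time]
      that img by (auto simp: \<psi>_def)
  have inverse_left: "\<psi> (T - escape_time x) = x" if "x > 0" for x
    using that bij_betw_escape_time by (simp add: \<psi>_def bij_betw_def)
  have deriv: "(\<psi> has_real_derivative inverse (h (\<psi> t))) (at t)" if t: "t < T" for t
  proof -
    let ?x = "\<psi> t"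
    have "((\<lambda>x. T - escape_time x) has_real_derivative h ?x) (at ?x)"
      using escape_time_deriv[OF pos[OF t]] by (auto intro!: derivative_eq_intros)
    then have "(\<psi> has_derivative (\<lambda>d. inverse (h ?x) * d)) (at (T - escape_time ?x))"
    proof (intro has_derivative_inverse_strong[of "{0<..}" ?x "\<lambda>x. T - escape_time x"])
      show "continuous_on {0<..} (\<lambda>x. T - escape_time x)"
        by (intro continuous_intros continuous_on_escape_time)
      show "(\<lambda>d. h ?x * d) \<circ> (\<lambda>d. inverse (h ?x) * d) = id"
        using h_pos[OF pos[OF t]] by (auto simp: fun_eq_iff)
    qed (use pos[OF t] inverse_left in \<open>auto simp: has_field_derivative_def\<close>)
    then show ?thesis using time_eq[OF t] by (simp add: has_field_derivative_def)
  qed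
  have "filterlim \<psi> at_top (at_left T)"
    unfolding filterlim_at_top
  proof
    fix M :: real
    have "eventually (\<lambda>t. T - escape_time (max M 1) < t \<and> t < T) (at_left T)"
      using escape_time_pos[of "max M 1"] eventually_at_left_real by force
    then show "eventually (\<lambda>t. M \<le> \<psi> t) (at_left T)"
    proof (rule eventually_mono)
      fix t assume "T - escape_time (max M 1) < t \<and> t < T"
      then show "M \<le> \<psi> t"
        using escape_time_strict_antimono[of "\<psi> t" "max M 1"] pos time_eq
        by (cases "\<psi> t < max M 1") auto
    qed
  qed
  then show ?thesis using pos deriv by (simp add: escape_solution_def \<psi>_def[symmetric])
qed

lemma escape_time_asymp_equiv:
  assumes "(g \<longlongrightarrow> 0) at_top" "eventually (\<lambda>x. g x \<noteq> 0) at_top"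
    and "eventually (\<lambda>x. (g has_real_derivative g' x) (at x)) at_top"
    and "((\<lambda>x. h x / g' x) \<longlongrightarrow> -1) at_top"
  shows "escape_time \<sim>[at_top] g"
proof (rule asymp_equivI')
  have "eventually (\<lambda>x. h x / g' x < 0) at_top"
    using assms(4) by (rule order_tendstoD) simp
  then have g'_nz: "eventually (\<lambda>x. g' x \<noteq> 0) at_top"
    by (rule eventually_mono) auto
  have deriv: "eventually (\<lambda>x. (escape_time has_real_derivative - h x) (at x)) at_top"
    using eventually_gt_at_top[of 0] by (rule eventually_mono) (rule escape_time_deriv)
  have "((\<lambda>x. - h x / g' x) \<longlongrightarrow> 1) at_top"
    using tendsto_minus[OF assms(4)] by simp
  then show "((\<lambda>x. escape_time x / g x) \<longlongrightarrow> 1) at_top"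
    by (rule lhopital_zero_at_top[OF escape_time_tendsto_0 assms(1,2) g'_nz deriv assms(3)])
qed

lemma escape_solution_asymp_equiv:
  assumes "escape_solution T \<psi>" "escape_time \<sim>[at_top] g"
  shows "(\<lambda>t. g (\<psi> t)) \<sim>[at_left T] (\<lambda>t. T - t)"
proof (rule asymp_equiv_transfer)
  show "(\<lambda>t. g (\<psi> t)) \<sim>[at_left T] (\<lambda>t. escape_time (\<psi> t))"
    using assms(1) by (intro asymp_equiv_compose'[OF asymp_equiv_symI[OF assms(2)]])
      (simp add: escape_solution_def)
  show "eventually (\<lambda>t. escape_time (\<psi> t) = T - t) (at_left T)"
    using eventually_at_left_real[of "T - 1" T]
    by (rule eventually_mono) (auto intro: escape_solution_escape_time[OF assms(1)])
qed simp

end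

definition inv_rhs :: "real \<Rightarrow> real \<Rightarrow> real \<Rightarrow> real" where
  "inv_rhs p \<alpha> x = x powr (-p) * ln (x\<^sup>2 + 2) powr (-\<alpha>)"

lemma sq_add_two_pos: "(x::real)\<^sup>2 + 2 > 0"
  using zero_le_power2[of x] by linarith

lemma ln_sq_add_two_pos: "ln ((x::real)\<^sup>2 + 2) > 0"
  using zero_le_power2[of x] by (intro ln_gt_zero) linarith

lemma inv_rhs_pos: "x > 0 \<Longrightarrow> inv_rhs p \<alpha> x > 0"
  using ln_sq_add_two_pos[of x] by (simp add: inv_rhs_def)

lemma inverse_inv_rhs: "inverse (inv_rhs p \<alpha> x) = x powr p * ln (x\<^sup>2 + 2) powr \<alpha>"
  by (simp add: inv_rhs_def powr_minus)

lemma bdd_above_antiderivative_inv_rhs: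
  assumes "p > 1" and H: "\<And>x. x > 0 \<Longrightarrow> (H has_real_derivative inv_rhs p \<alpha> x) (at x)"
  shows "bdd_above (H ` {0<..})"
proof -
  have H_mono: "H x \<le> H y" if "0 < x" "x \<le> y" for x y
    using that H inv_rhs_pos[of _ p \<alpha>]
    by (intro DERIV_nonneg_imp_nondecreasing[OF that(2)]) (metis less_eq_real_def less_le_trans)
  define q where "q = (p + 1) / 2"
  have "((\<lambda>x. x powr q * inv_rhs p \<alpha> x) \<longlongrightarrow> 0) at_top"
    using assms(1) unfolding q_def inv_rhs_def by real_asymp
  then have "eventually (\<lambda>x. x powr q * inv_rhs p \<alpha> x < 1 \<and> 1 \<le> x) at_top"
    by (intro eventually_conj order_tendstoD(2) eventually_ge_at_top) auto
  then obtain x\<^sub>0 where x\<^sub>0: "\<And>x. x \<ge> x\<^sub>0 \<Longrightarrow> x powr q * inv_rhs p \<alpha> x < 1 \<and> 1 \<le> x"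
    unfolding eventually_at_top_linorder by blast
  have "x\<^sub>0 \<ge> 1" using x\<^sub>0[of x\<^sub>0] by simp
  have bound: "inv_rhs p \<alpha> x \<le> 1 * x powr (-q)" if "x \<ge> x\<^sub>0" for x
    using x\<^sub>0[OF that] by (simp add: powr_minus field_simps)
  define M where "M = H x\<^sub>0 + 1 / (q - 1) * x\<^sub>0 powr (1 - q)"
  have "H x \<le> M" if "x > 0" for x
  proof (cases "x \<ge> x\<^sub>0")
    case True
    then show ?thesis
      unfolding M_def using assms \<open>x\<^sub>0 \<ge> 1\<close> bound
      by (intro antiderivative_le_of_le_powr[where h = "inv_rhs p \<alpha>"]) (auto simp: q_def)
  next
    case False
    then have "H x \<le> H x\<^sub>0" using H_mono that by simp
    moreover have "1 / (q - 1) * x\<^sub>0 powr (1 - q) \<ge> 0" using assms(1) by (simp add: q_def)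
    ultimately show ?thesis by (simp add: M_def)
  qed
  then show ?thesis by (intro bdd_aboveI2[where M = M]) simp
qed

lemma antiderivative_inv_rhs_at_right_0:
  assumes "p > 1" and H: "\<And>x. x > 0 \<Longrightarrow> (H has_real_derivative inv_rhs p \<alpha> x) (at x)"
  shows "filterlim H at_bot (at_right 0)"
proof -
  define c where "c = ln 2 powr (-\<alpha>) / 2"
  have "((\<lambda>x. inv_rhs p \<alpha> x / x powr (-p)) \<longlongrightarrow> ln 2 powr (-\<alpha>)) (at_right 0)"
    unfolding inv_rhs_def by real_asymp
  moreover have "c < ln 2 powr (-\<alpha>)" by (simp add: c_def)
  ultimately have "eventually (\<lambda>x. c < inv_rhs p \<alpha> x / x powr (-p)) (at_right 0)"
    by (rule order_tendstoD)
  then obtain x\<^sub>1 where "x\<^sub>1 > 0"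
    and x\<^sub>1: "\<And>x. 0 < x \<Longrightarrow> x < x\<^sub>1 \<Longrightarrow> c < inv_rhs p \<alpha> x / x powr (-p)"
    unfolding eventually_at_right_field by auto
  show ?thesis
  proof (rule antiderivative_at_right_0_at_bot[of p "x\<^sub>1 / 2" c])
    fix x assume "0 < x" "x \<le> x\<^sub>1 / 2"
    then show "c * x powr (-p) \<le> inv_rhs p \<alpha> x"
      using x\<^sub>1[of x] \<open>x\<^sub>1 > 0\<close> by (simp add: pos_less_divide_eq less_imp_le)
  qed (use assms \<open>x\<^sub>1 > 0\<close> in \<open>auto simp: c_def\<close>)
qed

lemma finite_escape_inv_rhs:
  assumes "p > 1"
  obtains H where "finite_escape (inv_rhs p \<alpha>) H"
proof -
  have "\<exists>H. \<forall>x. 0 < ereal x \<longrightarrow> ereal x < \<infinity> \<longrightarrow>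
          (H has_vector_derivative inv_rhs p \<alpha> x) (at x)"
    using less_imp_neq[OF ln_sq_add_two_pos, symmetric] less_imp_neq[OF sq_add_two_pos, symmetric]
    by (intro einterval_antiderivative) (auto simp: inv_rhs_def intro!: continuous_intros)
  then obtain H where H: "\<And>x. x > 0 \<Longrightarrow> (H has_real_derivative inv_rhs p \<alpha> x) (at x)"
    by (auto simp: has_real_derivative_iff_has_vector_derivative)
  have "finite_escape (inv_rhs p \<alpha>) H"
    using H inv_rhs_pos bdd_above_antiderivative_inv_rhs[OF assms H]
      antiderivative_inv_rhs_at_right_0[OF assms H]
    by unfold_locales
  then show ?thesis by (rule that)
qed

text \<open>The leading term of the escape time for \<open>h = inv_rhs p \<alpha>\<close>: integrate \<open>x\<^sup>-\<^sup>p\<close> and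
  treat the slowly varying logarithmic factor as a constant.\<close>

definition escape_approx :: "real \<Rightarrow> real \<Rightarrow> real \<Rightarrow> real" where
  "escape_approx p \<alpha> x = x powr (1 - p) * ln (x\<^sup>2 + 2) powr (-\<alpha>) / (p - 1)"

lemma escape_approx_pos: "p > 1 \<Longrightarrow> x > 0 \<Longrightarrow> escape_approx p \<alpha> x > 0"
  using ln_sq_add_two_pos[of x] by (simp add: escape_approx_def)

lemma escape_approx_deriv:
  assumes "p \<noteq> 1" "x > 0"
  shows "(escape_approx p \<alpha> has_real_derivative
           - inv_rhs p \<alpha> x * (1 + \<alpha> / (p - 1) * (2 * x\<^sup>2 / ((x\<^sup>2 + 2) * ln (x\<^sup>2 + 2))))) (at x)"
proof -
  define L where "L = ln (x\<^sup>2 + 2)"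
  define A where "A = x powr (-p)"
  define B where "B = L powr (-\<alpha>)"
  have L: "L > 0" "x\<^sup>2 + 2 > 0"
    using ln_sq_add_two_pos sq_add_two_pos unfolding L_def by auto
  have "(escape_approx p \<alpha> has_real_derivative
      ((1 - p) * x powr (1 - p - 1) * L powr (-\<alpha>)
       + x powr (1 - p) * (-\<alpha> * L powr (-\<alpha> - 1) * (2 * x / (x\<^sup>2 + 2)))) / (p - 1)) (at x)"
    unfolding escape_approx_def L_def using assms L unfolding L_def
    by (auto intro!: derivative_eq_intros simp: power2_eq_square)
  also have "x powr (1 - p - 1) = A"
    by (simp add: A_def)
  also have "x powr (1 - p) = x * A"
    using powr_add[of x 1 "-p"] assms(2) by (simp add: A_def)
  also have "L powr (-\<alpha> - 1) = B / L"
    using L by (simp add: B_def powr_diff)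
  also have "((1 - p) * A * L powr (-\<alpha>) + x * A * (-\<alpha> * (B / L) * (2 * x / (x\<^sup>2 + 2)))) / (p - 1)
      = - (A * B) * (1 + \<alpha> / (p - 1) * (2 * x\<^sup>2 / ((x\<^sup>2 + 2) * L)))"
  proof -
    have "((1 - p) * A * B + x * A * (-\<alpha> * (B / L) * (2 * x / q))) / (p - 1)
      = - (A * B) * (1 + \<alpha> / (p - 1) * (2 * x\<^sup>2 / (q * L)))" if "q \<noteq> 0" for q
      using that assms(1) L by (simp add: field_simps power2_eq_square)
    then show ?thesis using L by (simp add: B_def)
  qed
  finally show ?thesis by (simp add: inv_rhs_def A_def B_def L_def)
qed

lemma escape_time_inv_rhs_asymp_equiv:
  assumes "p > 1" "finite_escape (inv_rhs p \<alpha>) H"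
  shows "finite_escape.escape_time H \<sim>[at_top] escape_approx p \<alpha>"
proof -
  interpret finite_escape "inv_rhs p \<alpha>" H by fact
  let ?r = "\<lambda>x. 2 * x\<^sup>2 / ((x\<^sup>2 + 2) * ln (x\<^sup>2 + 2))"
  show ?thesis
  proof (rule escape_time_asymp_equiv)
    show "(escape_approx p \<alpha> \<longlongrightarrow> 0) at_top"
      using assms(1) unfolding escape_approx_def by real_asymp
    show "eventually (\<lambda>x. escape_approx p \<alpha> x \<noteq> 0) at_top"
      using eventually_gt_at_top[of 0]
      by (rule eventually_mono) (metis escape_approx_pos[OF assms(1)] less_irrefl)
    show "eventually (\<lambda>x. (escape_approx p \<alpha> has_real_derivative
           - inv_rhs p \<alpha> x * (1 + \<alpha> / (p - 1) * ?r x)) (at x)) at_top"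
      using eventually_gt_at_top[of 0]
      by (rule eventually_mono) (rule escape_approx_deriv; use assms(1) in simp)
    have "((\<lambda>x. -1 / (1 + \<alpha> / (p - 1) * ?r x)) \<longlongrightarrow> -1) at_top"
      by real_asymp
    moreover have "eventually (\<lambda>x. -1 / (1 + \<alpha> / (p - 1) * ?r x) =
        inv_rhs p \<alpha> x / (- inv_rhs p \<alpha> x * (1 + \<alpha> / (p - 1) * ?r x))) at_top"
      using eventually_gt_at_top[of 0]
      by (rule eventually_mono) (simp add: inv_rhs_pos less_imp_neq[symmetric])
    ultimately show "((\<lambda>x. inv_rhs p \<alpha> x / (- inv_rhs p \<alpha> x * (1 + \<alpha> / (p - 1) * ?r x)))
        \<longlongrightarrow> -1) at_top"
      by (rule Lim_transform_eventually)
  qed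
qed

lemma escape_approx_at_right_0: "p > 1 \<Longrightarrow> filterlim (escape_approx p \<alpha>) (at_right 0) at_top"
  unfolding escape_approx_def by real_asymp

lemma ln_escape_approx_asymp_equiv:
  "p > 1 \<Longrightarrow> (\<lambda>x. ln (escape_approx p \<alpha> x)) \<sim>[at_top] (\<lambda>x. (1 - p) / 2 * ln (x\<^sup>2 + 2))"
  unfolding escape_approx_def by (rule asymp_equivI') real_asymp

lemma escape_approx_powr_eq:
  assumes "p > 1" "y > 0"
  shows "((p - 1) * escape_approx p \<alpha> y * ln (y\<^sup>2 + 2) powr \<alpha>) powr (-1 / (p - 1)) = y"
proof -
  have "(p - 1) * escape_approx p \<alpha> y * ln (y\<^sup>2 + 2) powr \<alpha> = y powr (1 - p)"
    using assms(1) ln_sq_add_two_pos[of y] by (simp add: escape_approx_def powr_minus)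
  moreover have "(1 - p) * (-1 / (p - 1)) = 1"
    using assms(1) by (simp add: field_simps)
  ultimately show ?thesis
    using assms(2) by (simp add: powr_powr)
qed

lemma kappa_powr_eq:
  assumes "p > 1" "s > 0" "l > 0"
  shows "((p - 1) * s * (2 / (p - 1) * l) powr \<alpha>) powr (-1 / (p - 1))
    = kappa p \<alpha> * s powr (-1 / (p - 1)) * l powr (-\<alpha> / (p - 1))"
proof -
  define d where "d = p - 1"
  have "d > 0" using assms(1) by (simp add: d_def)
  then have "ln ((d * s * (2 / d * l) powr \<alpha>) powr (-1 / d))
      = ln ((d powr (-1 / d) * (d / 2) powr (\<alpha> / d)) * s powr (-1 / d) * l powr (-\<alpha> / d))"
    using assms(2,3) by (simp add: ln_powr ln_mult ln_div) (simp add: field_simps)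
  then have "(d * s * (2 / d * l) powr \<alpha>) powr (-1 / d)
      = (d powr (-1 / d) * (d / 2) powr (\<alpha> / d)) * s powr (-1 / d) * l powr (-\<alpha> / d)"
    by (rule ln_inj_iff[THEN iffD1, rotated 2]) (use \<open>d > 0\<close> assms(2,3) in auto)
  then show ?thesis
    by (simp add: kappa_def d_def[symmetric])
qed

lemma ln_asymp_equiv_of_escape_approx:
  fixes y s :: "'a \<Rightarrow> real"
  assumes "p > 1" "filterlim y at_top F" "(\<lambda>t. escape_approx p \<alpha> (y t)) \<sim>[F] s"
  shows "(\<lambda>t. ln ((y t)\<^sup>2 + 2)) \<sim>[F] (\<lambda>t. 2 / (p - 1) * \<bar>ln (s t)\<bar>)"
proof -
  let ?L = "\<lambda>t. ln ((y t)\<^sup>2 + 2)"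
  have e: "filterlim (\<lambda>t. escape_approx p \<alpha> (y t)) (at_right 0) F"
    using escape_approx_at_right_0[OF assms(1)] assms(2) by (rule filterlim_compose)
  have "filterlim s (at_right 0) F"
    using assms(3) e by (rule asymp_equiv_filterlim_at_right_0)
  then have s_small: "eventually (\<lambda>t. 0 < s t \<and> s t < 1) F"
    unfolding filterlim_at by (auto elim: eventually_elim2 dest: order_tendstoD(2)[of _ 0 F 1])
  have "(\<lambda>t. (1 - p) / 2 * ?L t) \<sim>[F] (\<lambda>t. ln (s t))"
    using asymp_equiv_symI[OF asymp_equiv_compose'[OF ln_escape_approx_asymp_equiv[OF assms(1)] assms(2)]]
      asymp_equiv_ln[OF assms(3) e]
    by (rule asymp_equiv_trans)
  then have "(\<lambda>t. 2 / (1 - p) * ((1 - p) / 2 * ?L t)) \<sim>[F] (\<lambda>t. 2 / (1 - p) * ln (s t))"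
    by (rule asymp_equiv_mult[OF asymp_equiv_refl])
  then show ?thesis
  proof (rule asymp_equiv_transfer)
    show "eventually (\<lambda>t. 2 / (1 - p) * ((1 - p) / 2 * ?L t) = ?L t) F"
      using assms(1) by simp
    show "eventually (\<lambda>t. 2 / (1 - p) * ln (s t) = 2 / (p - 1) * \<bar>ln (s t)\<bar>) F"
      using s_small by (rule eventually_mono) (use assms(1) in \<open>simp add: field_simps\<close>)
  qed
qed

lemma asymp_equiv_of_escape_approx:
  fixes y s :: "'a \<Rightarrow> real"
  assumes "p > 1" "filterlim y at_top F" "(\<lambda>t. escape_approx p \<alpha> (y t)) \<sim>[F] s"
  shows "y \<sim>[F] (\<lambda>t. kappa p \<alpha> * s t powr (-1 / (p - 1)) * \<bar>ln (s t)\<bar> powr (-\<alpha> / (p - 1)))"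
proof -
  let ?e = "\<lambda>t. escape_approx p \<alpha> (y t)"
  let ?L = "\<lambda>t. ln ((y t)\<^sup>2 + 2)"
  have "filterlim s (at_right 0) F"
    using asymp_equiv_filterlim_at_right_0[OF assms(3)
        filterlim_compose[OF escape_approx_at_right_0[OF assms(1)] assms(2)]] .
  then have "eventually (\<lambda>t. 0 < s t \<and> s t < 1) F"
    unfolding filterlim_at by (auto elim: eventually_elim2 dest: order_tendstoD(2)[of _ 0 F 1])
  moreover have "eventually (\<lambda>t. 0 < y t) F"
    using assms(2) by (simp add: filterlim_at_top_dense)
  ultimately have ev: "eventually (\<lambda>t. 0 < y t \<and> 0 < s t \<and> s t < 1) F"
    by eventually_elim simp
  have "(\<lambda>t. (p - 1) * ?e t * ?L t powr \<alpha>) \<sim>[F] (\<lambda>t. (p - 1) * s t * (2 / (p - 1) * \<bar>ln (s t)\<bar>) powr \<alpha>)"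
  proof (rule asymp_equiv_mult[OF asymp_equiv_mult[OF asymp_equiv_refl assms(3)]])
    show "(\<lambda>t. ?L t powr \<alpha>) \<sim>[F] (\<lambda>t. (2 / (p - 1) * \<bar>ln (s t)\<bar>) powr \<alpha>)"
      using assms(1) ln_sq_add_two_pos
      by (intro asymp_equiv_powr_real[OF ln_asymp_equiv_of_escape_approx[OF assms]] always_eventually)
        simp_all
  qed
  then have "(\<lambda>t. ((p - 1) * ?e t * ?L t powr \<alpha>) powr (-1 / (p - 1)))
      \<sim>[F] (\<lambda>t. ((p - 1) * s t * (2 / (p - 1) * \<bar>ln (s t)\<bar>) powr \<alpha>) powr (-1 / (p - 1)))"
  proof (rule asymp_equiv_powr_real)
    show "eventually (\<lambda>t. 0 \<le> (p - 1) * ?e t * ?L t powr \<alpha>) F"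
      using ev by (rule eventually_mono)
        (use assms(1) in \<open>auto intro!: mult_nonneg_nonneg less_imp_le[OF escape_approx_pos]\<close>)
    show "eventually (\<lambda>t. 0 \<le> (p - 1) * s t * (2 / (p - 1) * \<bar>ln (s t)\<bar>) powr \<alpha>) F"
      using ev by (rule eventually_mono) (use assms(1) in force)
  qed
  then show ?thesis
  proof (rule asymp_equiv_transfer)
    show "eventually (\<lambda>t. ((p - 1) * ?e t * ?L t powr \<alpha>) powr (-1 / (p - 1)) = y t) F"
      using ev by (rule eventually_mono) (rule escape_approx_powr_eq[OF assms(1)]; simp)
    show "eventually (\<lambda>t. ((p - 1) * s t * (2 / (p - 1) * \<bar>ln (s t)\<bar>) powr \<alpha>) powr (-1 / (p - 1))
        = kappa p \<alpha> * s t powr (-1 / (p - 1)) * \<bar>ln (s t)\<bar> powr (-\<alpha> / (p - 1))) F"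
      using ev by (rule eventually_mono) (rule kappa_powr_eq[OF assms(1)]; simp)
  qed
qed

theorem lemmaA1:
  fixes p \<alpha> T :: real
  assumes "p > 1" and "T > 0"
  shows "(\<exists>\<psi>. blowup_solution p \<alpha> T \<psi>) \<and>
         (\<forall>\<psi>1 \<psi>2. blowup_solution p \<alpha> T \<psi>1 \<longrightarrow> blowup_solution p \<alpha> T \<psi>2 \<longrightarrow>
              (\<forall>t<T. \<psi>1 t = \<psi>2 t)) \<and>
         (\<forall>\<psi>. blowup_solution p \<alpha> T \<psi> \<longrightarrow>
              \<psi> \<sim>[at_left T] (\<lambda>t. kappa p \<alpha> * (T - t) powr (-1 / (p - 1)) *
                                       \<bar>ln (T - t)\<bar> powr (-\<alpha> / (p - 1))))"
proof -
  obtain H where "finite_escape (inv_rhs p \<alpha>) H"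
    using finite_escape_inv_rhs[OF assms(1)] .
  then interpret finite_escape "inv_rhs p \<alpha>" H .
  have sol_iff: "blowup_solution p \<alpha> T \<psi> \<longleftrightarrow> escape_solution T \<psi>" for \<psi>
    by (simp add: blowup_solution_def escape_solution_def inverse_inv_rhs)
  have "\<psi> \<sim>[at_left T] (\<lambda>t. kappa p \<alpha> * (T - t) powr (-1 / (p - 1)) * \<bar>ln (T - t)\<bar> powr (-\<alpha> / (p - 1)))"
    if "escape_solution T \<psi>" for \<psi>
  proof (rule asymp_equiv_of_escape_approx[OF assms(1)])
    show "filterlim \<psi> at_top (at_left T)"
      using that by (simp add: escape_solution_def)
    show "(\<lambda>t. escape_approx p \<alpha> (\<psi> t)) \<sim>[at_left T] (\<lambda>t. T - t)"
      using that escape_time_inv_rhs_asymp_equiv[OF assms(1) finite_escape_axioms]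
      by (rule escape_solution_asymp_equiv)
  qed
  then show ?thesis
    using escape_solution_exists escape_solution_unique by (auto simp: sol_iff)
qed

end
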